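(* Let $\tau,t\in\mathbb{R}$ and let $P_n(x;\tau,t)$ be the monic orthogonal polynomials for the weight $\omega(x;\tau,t)=\exp(-x^6+\tau x^4+tx^2)$ on $\mathbb{R}$, with recurrence coefficients $\beta_n$. Then for $n\ge1$ $$\frac{dP_n}{dx}(x;\tau,t)=-B_n(x;\tau,t)P_n(x;\tau,t)+A_n(x;\tau,t)P_{n-1}(x;\tau,t),$$ where $$A_n(x;\tau,t)=\beta_n\big\{6x^4-4\tau x^2-2t+(6x^2-4\tau)(\beta_n+\beta_{n+1})\big\}+6\beta_n\big\{\beta_n(\beta_{n-1}+\beta_n+\beta_{n+1})+\beta_{n+1}(\beta_n+\beta_{n+1}+\beta_{n+2})\big\},$$ $$B_n(x;\tau,t)=\beta_n\big\{6x^3-4\tau x+6x(\beta_{n-1}+\beta_n+\beta_{n+1})\big\}.$$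
   Context: The monic polynomials $P_n(x;\tau,t)$ of exact degree $n$ are orthogonal with respect to $\omega(x;\tau,t)$ on $\mathbb{R}$. They satisfy $P_{n+1}(x)=xP_n(x)-\beta_nP_{n-1}(x)$ with $P_{-1}=0$, $P_0=1$, where $\beta_n>0$ for $n\ge1$. The convention $\beta_0=0$ is used. *)

theory Defs
  imports "HOL-Analysis.Analysis" "HOL-Computational_Algebra.Polynomial"
begin

definition sextic_weight :: "real \<Rightarrow> real \<Rightarrow> real \<Rightarrow> real" where
  "sextic_weight \<tau> t x = exp (- (x ^ 6) + \<tau> * x ^ 4 + t * x ^ 2)"

definition monic_OPS_rec ::
  "(real \<Rightarrow> real) \<Rightarrow> (nat \<Rightarrow> real poly) \<Rightarrow> (nat \<Rightarrow> real) \<Rightarrow> bool" where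
  "monic_OPS_rec w P \<beta> \<longleftrightarrow>
     (\<forall>n. degree (P n) = n \<and> lead_coeff (P n) = 1) \<and>
     (\<forall>m n. m \<noteq> n \<longrightarrow>
        ((\<lambda>x. poly (P m) x * poly (P n) x * w x) has_integral 0) UNIV) \<and>
     \<beta> 0 = 0 \<and> (\<forall>n\<ge>1. \<beta> n > 0) \<and>
     (\<forall>n. P (Suc n) = [:0, 1:] * P n - smult (\<beta> n) (if n = 0 then 0 else P (n - 1)))"

definition coeffA :: "real \<Rightarrow> real \<Rightarrow> (nat \<Rightarrow> real) \<Rightarrow> nat \<Rightarrow> real \<Rightarrow> real" where
  "coeffA \<tau> t \<beta> n x =
     \<beta> n * (6 * x ^ 4 - 4 * \<tau> * x ^ 2 - 2 * t + (6 * x ^ 2 - 4 * \<tau>) * (\<beta> n + \<beta> (n + 1)))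
     + 6 * \<beta> n * (\<beta> n * (\<beta> (n - 1) + \<beta> n + \<beta> (n + 1))
                   + \<beta> (n + 1) * (\<beta> n + \<beta> (n + 1) + \<beta> (n + 2)))"

definition coeffB :: "real \<Rightarrow> real \<Rightarrow> (nat \<Rightarrow> real) \<Rightarrow> nat \<Rightarrow> real \<Rightarrow> real" where
  "coeffB \<tau> t \<beta> n x =
     \<beta> n * (6 * x ^ 3 - 4 * \<tau> * x + 6 * x * (\<beta> (n - 1) + \<beta> n + \<beta> (n + 1)))"

end

(*
  Chen-Ismail ladder argument.  Write the weight as exp (- v y) with
  v y = y^6 - tau y^4 - t y^2 and let h k = L (P k ^ 2) for its moment functional L.
  Since P n' has degree < n, it is reproduced by the Christoffel-Darboux kernel
  S x y = sum (k < n) P k x P k y / h k.  Integration by parts (L p' = L (p v')) and the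
  orthogonality of P n to all polynomials of degree < n turn P n' x = L (P n' (S x)) into
  L (P n (S x) v') = L (P n (y - x) (S x y) (Q x y)), where Q x y = (v' y - v' x) / (y - x).
  The Christoffel-Darboux formula
    h (n - 1) (y - x) S x y = P (n - 1) x P n y - P n x P (n - 1) y
  then gives h (n - 1) P n' x = P (n - 1) x L (Q x P n ^ 2) - P n x L (Q x P n P (n - 1)).
  As Q x is a quartic in y, only moments of order at most 4 against P n ^ 2 and P n P (n - 1)
  remain; the three-term recurrence evaluates them, and since it has no diagonal term the odd
  ones vanish.
*)

theory Submission
  imports Defs "HOL-Probability.Distributions" "HOL-Real_Asymp.Real_Asymp"
begin

definition x_poly :: "real poly" where
  "x_poly = [:0, 1:]"

lemma poly_x_poly [simp]: "poly x_poly y = y"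
  by (simp add: x_poly_def)

locale symmetric_OPS =
  fixes L :: "real poly \<Rightarrow> real" and P :: "nat \<Rightarrow> real poly" and \<beta> :: "nat \<Rightarrow> real"
  assumes L_add: "L (p + q) = L p + L q"
    and L_smult: "L (smult c p) = c * L p"
    and L_one_nonzero: "L 1 \<noteq> 0"
    and degree_P: "degree (P n) = n"
    and lead_coeff_P: "lead_coeff (P n) = 1"
    and orthogonal: "m \<noteq> n \<Longrightarrow> L (P m * P n) = 0"
    and beta_0: "\<beta> 0 = 0"
    and beta_nonzero: "n \<ge> 1 \<Longrightarrow> \<beta> n \<noteq> 0"
    and P_Suc: "P (Suc n) = x_poly * P n - smult (\<beta> n) (P (n - 1))"
      \<comment> \<open>for n = 0 the truncated index n - 1 = 0 is harmless because \<beta> 0 = 0\<close>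
begin

lemma L_zero: "L 0 = 0"
  using L_smult[of 0 0] by simp

lemma L_minus: "L (- p) = - L p"
  using L_smult[of "-1" p] by simp

lemma L_diff: "L (p - q) = L p - L q"
  using L_add[of p "- q"] by (simp add: L_minus)

lemma L_sum: "L (\<Sum>i\<in>A. f i) = (\<Sum>i\<in>A. L (f i))"
  by (induction A rule: infinite_finite_induct) (simp_all add: L_zero L_add)

lemmas L_linear = L_add L_diff L_minus L_smult L_sum L_zero

definition h :: "nat \<Rightarrow> real" where
  "h n = L (P n * P n)"

lemma L_P_mult_P: "L (P m * P n) = (if m = n then h n else 0)"
  by (simp add: h_def orthogonal)

lemma P_0: "P 0 = 1"
  using degree_0_id[of "P 0"] degree_P[of 0] lead_coeff_P[of 0] by (simp add: one_pCons)

lemma x_poly_mult_P: "x_poly * P n = P (Suc n) + smult (\<beta> n) (P (n - 1))"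
  by (simp add: P_Suc)

lemma h_Suc: "h (Suc n) = \<beta> (Suc n) * h n"
proof -
  have "P (Suc n) * P (Suc n) = (x_poly * P (Suc n)) * P n - smult (\<beta> n) (P (Suc n) * P (n - 1))"
    by (subst (2) P_Suc) (simp add: algebra_simps)
  also have "\<dots> = P (Suc (Suc n)) * P n + smult (\<beta> (Suc n)) (P n * P n)
      - smult (\<beta> n) (P (Suc n) * P (n - 1))"
    by (simp add: x_poly_mult_P algebra_simps)
  finally show ?thesis
    by (simp add: h_def L_linear orthogonal)
qed

lemma h_nonzero: "h n \<noteq> 0"
proof (induction n)
  case 0
  show ?case
    by (simp add: h_def P_0 L_one_nonzero)
next
  case (Suc n)
  then show ?case
    by (simp add: h_Suc beta_nonzero)
qed

lemma orthogonal_expansion: "degree q \<le> n \<Longrightarrow> q = (\<Sum>k\<le>n. smult (L (q * P k) / h k) (P k))"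
proof (induction n arbitrary: q)
  case 0
  then have q: "q = smult (coeff q 0) (P 0)"
    by (simp add: P_0 degree_0_id[symmetric] one_pCons)
  have "L (q * P 0) = coeff q 0 * h 0"
    by (subst q) (simp only: mult_smult_left L_smult h_def)
  with q show ?case
    using h_nonzero[of 0] by simp
next
  case (Suc n)
  define c where "c = coeff q (Suc n)"
  define r where "r = q - smult c (P (Suc n))"
  have "coeff r i = 0" if "i > n" for i
  proof (cases "i = Suc n")
    case True
    then show ?thesis
      using lead_coeff_P[of "Suc n"] by (simp add: r_def c_def degree_P)
  next
    case False
    then show ?thesis
      using that Suc.prems degree_P[of "Suc n"] by (simp add: r_def coeff_eq_0)
  qed
  then have "degree r \<le> n"
    by (simp add: degree_le)
  then have r: "r = (\<Sum>k\<le>n. smult (L (r * P k) / h k) (P k))"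
    by (rule Suc.IH)
  have "L (r * P (Suc n)) = 0"
    by (subst r) (simp add: sum_distrib_right L_linear orthogonal)
  moreover have "L (q * P (Suc n)) = L (r * P (Suc n)) + c * h (Suc n)"
    by (simp add: r_def h_def L_linear left_diff_distrib)
  ultimately have "L (q * P (Suc n)) / h (Suc n) = c"
    by (simp add: h_nonzero)
  moreover have "L (q * P k) = L (r * P k)" if "k \<le> n" for k
    using that by (simp add: r_def L_linear orthogonal left_diff_distrib)
  ultimately show ?case
    using r by (simp add: r_def)
qed

lemma L_mult_P_eq_0: "degree q < n \<Longrightarrow> L (q * P n) = 0"
proof -
  assume "degree q < n"
  then obtain m where n: "n = Suc m" and "degree q \<le> m"
    by (cases n) auto
  then have q: "q = (\<Sum>k\<le>m. smult (L (q * P k) / h k) (P k))"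
    by (intro orthogonal_expansion)
  have "L (q * P n) = (\<Sum>k\<le>m. L (q * P k) / h k * L (P k * P n))"
    by (subst (1) q) (simp add: sum_distrib_right L_linear)
  also have "\<dots> = 0"
    by (simp add: n orthogonal)
  finally show ?thesis .
qed

definition CD_kernel :: "nat \<Rightarrow> real \<Rightarrow> real poly" where
  "CD_kernel n x = (\<Sum>k\<le>n. smult (poly (P k) x / h k) (P k))"

lemma degree_CD_kernel: "degree (CD_kernel n x) \<le> n"
  unfolding CD_kernel_def by (intro degree_sum_le) (auto simp: degree_P)

lemma L_mult_CD_kernel:
  assumes "degree q \<le> n"
  shows "L (q * CD_kernel n x) = poly q x"
proof -
  have q: "q = (\<Sum>k\<le>n. smult (L (q * P k) / h k) (P k))"
    using assms by (rule orthogonal_expansion)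
  have "L (q * CD_kernel n x) = (\<Sum>k\<le>n. poly (P k) x / h k * L (q * P k))"
    by (simp add: CD_kernel_def sum_distrib_left L_sum L_smult)
  also have "\<dots> = (\<Sum>k\<le>n. L (q * P k) / h k * poly (P k) x)"
    by (simp add: ac_simps)
  also have "\<dots> = poly (\<Sum>k\<le>n. smult (L (q * P k) / h k) (P k)) x"
    by (simp add: poly_sum)
  also have "\<dots> = poly q x"
    by (simp only: q[symmetric])
  finally show ?thesis .
qed

lemma poly_P_Suc: "poly (P (Suc n)) y = y * poly (P n) y - \<beta> n * poly (P (n - 1)) y"
  by (simp add: P_Suc)

lemma Christoffel_Darboux:
  "smult (h n) ([:-x, 1:] * CD_kernel n x)
     = smult (poly (P n) x) (P (Suc n)) - smult (poly (P (Suc n)) x) (P n)"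
proof (induction n)
  case 0
  show ?case
    by (simp add: CD_kernel_def P_0 P_Suc beta_0 h_nonzero x_poly_def)
next
  case (Suc n)
  show ?case
  proof (rule poly_ext)
    fix y
    have IH: "h n * ((y - x) * poly (CD_kernel n x) y)
        = poly (P n) x * poly (P (Suc n)) y - poly (P (Suc n)) x * poly (P n) y"
      using arg_cong[OF Suc.IH, of "\<lambda>p. poly p y"] by (simp add: algebra_simps)
    have "h (Suc n) * ((y - x) * poly (CD_kernel (Suc n) x) y)
        = \<beta> (Suc n) * (h n * ((y - x) * poly (CD_kernel n x) y))
          + (y - x) * poly (P (Suc n)) x * poly (P (Suc n)) y"
      using h_nonzero[of "Suc n"] by (simp add: CD_kernel_def h_Suc field_simps)
    also have "\<dots> = poly (P (Suc n)) x * poly (P (Suc (Suc n))) y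
        - poly (P (Suc (Suc n))) x * poly (P (Suc n)) y"
      unfolding IH poly_P_Suc[of "Suc n"] by (simp add: algebra_simps)
    finally show "poly (smult (h (Suc n)) ([:-x, 1:] * CD_kernel (Suc n) x)) y
        = poly (smult (poly (P (Suc n)) x) (P (Suc (Suc n))) - smult (poly (P (Suc (Suc n))) x) (P (Suc n))) y"
      by (simp add: algebra_simps)
  qed
qed

lemma ladder_relation:
  assumes L_pderiv: "\<And>p. L (pderiv p) = L (p * dv)"
    and dv_split: "dv = [:c:] + [:-x, 1:] * K"
  shows "h n * poly (pderiv (P (Suc n))) x
    = poly (P n) x * L (K * (P (Suc n) * P (Suc n))) - poly (P (Suc n)) x * L (K * (P (Suc n) * P n))"
proof -
  define S where "S = CD_kernel n x"
  have "poly (pderiv (P (Suc n))) x = L (pderiv (P (Suc n)) * S)"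
    by (simp add: S_def L_mult_CD_kernel degree_pderiv degree_P)
  also have "\<dots> = L (pderiv (P (Suc n) * S)) - L (pderiv S * P (Suc n))"
    by (simp add: pderiv_mult L_linear algebra_simps)
  also have "L (pderiv S * P (Suc n)) = 0"
    using degree_CD_kernel[of n x] by (intro L_mult_P_eq_0) (simp add: S_def degree_pderiv)
  also have "L (pderiv (P (Suc n) * S)) = L (K * P (Suc n) * ([:-x, 1:] * S))"
  proof -
    have "P (Suc n) * S * dv = smult c (S * P (Suc n)) + K * P (Suc n) * ([:-x, 1:] * S)"
      by (simp add: dv_split algebra_simps)
    moreover have "L (S * P (Suc n)) = 0"
      using degree_CD_kernel[of n x] by (intro L_mult_P_eq_0) (simp add: S_def)
    ultimately show ?thesis
      by (simp add: L_pderiv L_linear)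
  qed
  finally have "h n * poly (pderiv (P (Suc n))) x = L (K * P (Suc n) * smult (h n) ([:-x, 1:] * S))"
    by (simp add: L_smult)
  also have "K * P (Suc n) * smult (h n) ([:-x, 1:] * S)
      = smult (poly (P n) x) (K * (P (Suc n) * P (Suc n))) - smult (poly (P (Suc n)) x) (K * (P (Suc n) * P n))"
    unfolding S_def Christoffel_Darboux by (simp add: algebra_simps)
  finally show ?thesis
    by (simp add: L_linear)
qed

lemma x_poly_sq_mult_P:
  "x_poly\<^sup>2 * P n
     = P (n + 2) + smult (\<beta> n + \<beta> (Suc n)) (P n) + smult (\<beta> n * \<beta> (n - 1)) (P (n - 2))"
proof -
  have "x_poly\<^sup>2 * P n = x_poly * P (Suc n) + smult (\<beta> n) (x_poly * P (n - 1))"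
    by (simp add: power2_eq_square mult.assoc x_poly_mult_P[of n] algebra_simps)
  also have "smult (\<beta> n) (x_poly * P (n - 1))
      = smult (\<beta> n) (P n) + smult (\<beta> n * \<beta> (n - 1)) (P (n - 2))"
    by (cases n) (simp_all add: x_poly_mult_P beta_0 smult_add_right)
  finally show ?thesis
    by (simp add: x_poly_mult_P smult_add_left algebra_simps)
qed

lemma L_x_poly_power_P_P_odd: "odd (j + a + b) \<Longrightarrow> L (x_poly ^ j * (P a * P b)) = 0"
proof (induction j arbitrary: a)
  case 0
  then have "a \<noteq> b"
    by auto
  then show ?case
    by (simp add: orthogonal)
next
  case (Suc j)
  have "x_poly ^ Suc j * (P a * P b) = x_poly ^ j * ((x_poly * P a) * P b)"
    by (simp add: mult_ac)
  also have "\<dots> = x_poly ^ j * (P (Suc a) * P b) + smult (\<beta> a) (x_poly ^ j * (P (a - 1) * P b))"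
    by (simp add: x_poly_mult_P algebra_simps)
  finally have "x_poly ^ Suc j * (P a * P b)
      = x_poly ^ j * (P (Suc a) * P b) + smult (\<beta> a) (x_poly ^ j * (P (a - 1) * P b))" .
  moreover have "L (x_poly ^ j * (P (Suc a) * P b)) = 0"
    using Suc.IH[of "Suc a"] Suc.prems by simp
  moreover have "\<beta> a * L (x_poly ^ j * (P (a - 1) * P b)) = 0"
    using Suc.IH[of "a - 1"] Suc.prems by (cases a) (simp_all add: beta_0)
  ultimately show ?case
    by (simp add: L_linear)
qed

lemma L_x_poly_sq_P_P: "L (x_poly\<^sup>2 * (P n * P n)) = (\<beta> n + \<beta> (Suc n)) * h n"
proof -
  have "\<beta> n * \<beta> (n - 1) * L (P (n - 2) * P n) = 0"
    by (cases n) (simp_all add: beta_0 orthogonal)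
  then show ?thesis
    unfolding mult.assoc[symmetric] x_poly_sq_mult_P by (simp add: distrib_right L_linear h_def orthogonal)
qed

lemma L_x_poly_4_P_P:
  "L (x_poly ^ 4 * (P n * P n))
     = (\<beta> n * (\<beta> (n - 1) + \<beta> n + \<beta> (n + 1))
        + \<beta> (n + 1) * (\<beta> n + \<beta> (n + 1) + \<beta> (n + 2))) * h n"
proof -
  have "x_poly ^ 4 * (P n * P n) = (x_poly\<^sup>2 * P n) * (x_poly\<^sup>2 * P n)"
    by (simp add: power_numeral_reduce power2_eq_square mult_ac)
  then have "L (x_poly ^ 4 * (P n * P n))
      = h (n + 2) + (\<beta> n + \<beta> (Suc n))\<^sup>2 * h n + (\<beta> n * \<beta> (n - 1))\<^sup>2 * h (n - 2)"
    unfolding x_poly_sq_mult_P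
    by (cases n) (auto simp: distrib_left distrib_right L_linear L_P_mult_P power2_eq_square beta_0)
  also have "\<dots> = (\<beta> n * (\<beta> (n - 1) + \<beta> n + \<beta> (n + 1))
      + \<beta> (n + 1) * (\<beta> n + \<beta> (n + 1) + \<beta> (n + 2))) * h n"
    by (cases n; cases "n - 1") (simp_all add: h_Suc beta_0 power2_eq_square algebra_simps)
  finally show ?thesis .
qed

lemma L_x_poly_P_Suc_P: "L (x_poly * (P (Suc n) * P n)) = h (Suc n)"
proof -
  have "x_poly * (P (Suc n) * P n) = P (Suc n) * (x_poly * P n)"
    by (simp add: mult_ac)
  then show ?thesis
    by (simp add: x_poly_mult_P distrib_left L_linear L_P_mult_P)
qed

lemma L_x_poly_3_P_Suc_P:
  "L (x_poly ^ 3 * (P (Suc n) * P n)) = (\<beta> n + \<beta> (Suc n) + \<beta> (n + 2)) * h (Suc n)"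
proof -
  have "x_poly ^ 3 * (P (Suc n) * P n) = (x_poly\<^sup>2 * P (Suc n)) * (x_poly * P n)"
    by (simp add: power_numeral_reduce power2_eq_square mult_ac)
  then have "L (x_poly ^ 3 * (P (Suc n) * P n))
      = (\<beta> (Suc n) + \<beta> (n + 2)) * h (Suc n) + \<beta> (Suc n) * \<beta> n * \<beta> n * h (n - 1)"
    unfolding x_poly_sq_mult_P x_poly_mult_P
    by (auto simp: distrib_left distrib_right L_linear L_P_mult_P)
  also have "\<dots> = (\<beta> n + \<beta> (Suc n) + \<beta> (n + 2)) * h (Suc n)"
    by (cases n) (simp_all add: h_Suc beta_0 algebra_simps)
  finally show ?thesis .
qed

lemma L_quartic_mult:
  "L ([:c0, c1, c2, c3, c4:] * q)
     = c0 * L q + c1 * L (x_poly * q) + c2 * L (x_poly\<^sup>2 * q) + c3 * L (x_poly ^ 3 * q)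
       + c4 * L (x_poly ^ 4 * q)"
proof -
  have "[:c0, c1, c2, c3, c4:] * q
      = smult c0 q + smult c1 (x_poly * q) + smult c2 (x_poly\<^sup>2 * q) + smult c3 (x_poly ^ 3 * q)
        + smult c4 (x_poly ^ 4 * q)"
    by (rule poly_ext) (simp add: algebra_simps power_numeral_reduce)
  then show ?thesis
    by (simp add: L_linear)
qed

end

definition sextic_difference_quotient :: "real \<Rightarrow> real \<Rightarrow> real \<Rightarrow> real poly" where
  "sextic_difference_quotient \<tau> t x =
     [:6 * x ^ 4 - 4 * \<tau> * x\<^sup>2 - 2 * t, 6 * x ^ 3 - 4 * \<tau> * x, 6 * x\<^sup>2 - 4 * \<tau>, 6 * x, 6:]"

context symmetric_OPS
begin

lemma L_sextic_difference_quotient_P_P: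
  "L (sextic_difference_quotient \<tau> t x * (P (Suc m) * P (Suc m))) = h m * coeffA \<tau> t \<beta> (Suc m) x"
proof -
  have "L (x_poly * (P (Suc m) * P (Suc m))) = 0" "L (x_poly ^ 3 * (P (Suc m) * P (Suc m))) = 0"
    using L_x_poly_power_P_P_odd[of 1 "Suc m" "Suc m"] L_x_poly_power_P_P_odd[of 3 "Suc m" "Suc m"]
    by simp_all
  then show ?thesis
    unfolding sextic_difference_quotient_def L_quartic_mult L_x_poly_sq_P_P L_x_poly_4_P_P h_def[symmetric]
    by (simp add: h_Suc coeffA_def algebra_simps)
qed

lemma L_sextic_difference_quotient_P_Suc_P:
  "L (sextic_difference_quotient \<tau> t x * (P (Suc m) * P m)) = h m * coeffB \<tau> t \<beta> (Suc m) x"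
proof -
  have "L (x_poly ^ j * (P (Suc m) * P m)) = 0" if "even j" for j
    using that by (intro L_x_poly_power_P_P_odd) simp
  from this[of 0] this[of 2] this[of 4] show ?thesis
    unfolding sextic_difference_quotient_def L_quartic_mult L_x_poly_P_Suc_P L_x_poly_3_P_Suc_P
    by (simp add: h_Suc coeffB_def algebra_simps)
qed

end

lemma integral_lborel_deriv_eq_0:
  fixes F f :: "real \<Rightarrow> real"
  assumes "\<And>x. (F has_real_derivative f x) (at x)" and "\<And>x. isCont f x"
    and "integrable lborel f" and "(F \<longlongrightarrow> 0) at_bot" and "(F \<longlongrightarrow> 0) at_top"
  shows "integral\<^sup>L lborel f = 0"
proof -
  have "(LBINT x=-\<infinity>..\<infinity>. f x) = 0 - 0"
    by (rule interval_integral_FTC_integrable)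
      (use assms in \<open>auto simp: has_real_derivative_iff_has_vector_derivative set_integrable_def
         ereal_tendsto_simps\<close>)
  then show ?thesis
    by (simp add: interval_lebesgue_integral_def set_lebesgue_integral_def)
qed

definition moment_functional :: "(real \<Rightarrow> real) \<Rightarrow> real poly \<Rightarrow> real" where
  "moment_functional w p = (\<integral>x. poly p x * w x \<partial>lborel)"

lemma poly_mult_eq_sum_monomials:
  fixes w :: "real \<Rightarrow> real"
  shows "poly p x * w x = (\<Sum>i\<le>degree p. coeff p i * (x ^ i * w x))"
  by (simp add: poly_altdef sum_distrib_right mult.assoc)

lemma integrable_poly_mult:
  fixes w :: "real \<Rightarrow> real"
  assumes "\<And>k. integrable lborel (\<lambda>x. x ^ k * w x)"
  shows "integrable lborel (\<lambda>x. poly p x * w x)"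
  unfolding poly_mult_eq_sum_monomials using assms
  by (intro Bochner_Integration.integrable_sum Bochner_Integration.integrable_mult_right)

lemma tendsto_poly_mult_zero:
  fixes w :: "real \<Rightarrow> real"
  assumes "\<And>k. ((\<lambda>x. x ^ k * w x) \<longlongrightarrow> 0) F"
  shows "((\<lambda>x. poly p x * w x) \<longlongrightarrow> 0) F"
  unfolding poly_mult_eq_sum_monomials using assms by (intro tendsto_null_sum tendsto_mult_right_zero)

lemma moment_functional_add:
  assumes "\<And>k. integrable lborel (\<lambda>x. x ^ k * w x)"
  shows "moment_functional w (p + q) = moment_functional w p + moment_functional w q"
  unfolding moment_functional_def
  by (simp add: distrib_right integrable_poly_mult[OF assms])

lemma moment_functional_smult:
  "moment_functional w (smult c p) = c * moment_functional w p"
  unfolding moment_functional_def by (simp add: mult.assoc)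

lemma moment_functional_pderiv:
  assumes w: "\<And>x. w x = exp (- poly v x)"
    and integrable: "\<And>k. integrable lborel (\<lambda>x. x ^ k * w x)"
    and "\<And>k. ((\<lambda>x. x ^ k * w x) \<longlongrightarrow> 0) at_bot"
    and "\<And>k. ((\<lambda>x. x ^ k * w x) \<longlongrightarrow> 0) at_top"
  shows "moment_functional w (pderiv p) = moment_functional w (p * pderiv v)"
proof -
  have "moment_functional w (pderiv p - p * pderiv v) = 0"
    unfolding moment_functional_def
  proof (rule integral_lborel_deriv_eq_0)
    show "((\<lambda>x. poly p x * w x) has_real_derivative poly (pderiv p - p * pderiv v) x * w x) (at x)" for x
      unfolding w by (auto intro!: derivative_eq_intros poly_DERIV simp: algebra_simps)
    show "isCont (\<lambda>x. poly (pderiv p - p * pderiv v) x * w x) x" for x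
      unfolding w by (intro continuous_intros)
    show "integrable lborel (\<lambda>x. poly (pderiv p - p * pderiv v) x * w x)"
      using integrable by (rule integrable_poly_mult)
    show "((\<lambda>x. poly p x * w x) \<longlongrightarrow> 0) at_bot"
      and "((\<lambda>x. poly p x * w x) \<longlongrightarrow> 0) at_top"
      by (simp_all add: assms(3,4) tendsto_poly_mult_zero)
  qed
  moreover have "moment_functional w (pderiv p)
      = moment_functional w (pderiv p - p * pderiv v) + moment_functional w (p * pderiv v)"
    by (simp flip: moment_functional_add[OF integrable])
  ultimately show ?thesis by simp
qed

lemma sextic_exponent_le:
  fixes \<tau> t x :: real
  shows "- (x ^ 6) + \<tau> * x ^ 4 + t * x\<^sup>2 \<le> (\<bar>\<tau>\<bar> + \<bar>t\<bar> + 1) ^ 3 - x\<^sup>2 / 2"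
proof -
  define u where "u = x\<^sup>2"
  define M where "M = \<bar>\<tau>\<bar> + \<bar>t\<bar> + 1"
  have u: "u \<ge> 0" and M: "M \<ge> 1" by (simp_all add: u_def M_def)
  have tau_term: "\<tau> * u\<^sup>2 \<le> \<bar>\<tau>\<bar> * u\<^sup>2"
    by (intro mult_right_mono) auto
  have "\<tau> * u\<^sup>2 + (t + 1 / 2) * u \<le> M ^ 3 + u ^ 3"
  proof (cases "u \<le> M")
    case True
    have "\<bar>\<tau>\<bar> * u\<^sup>2 \<le> \<bar>\<tau>\<bar> * M\<^sup>2"
      using True u by (intro mult_left_mono power_mono) auto
    moreover have "(t + 1 / 2) * u \<le> (\<bar>t\<bar> + 1) * M"
      using True u by (intro mult_mono) auto
    moreover have "M ^ 3 = M * M\<^sup>2" by (simp add: power2_eq_square power3_eq_cube)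
    moreover have "M * M\<^sup>2 = \<bar>\<tau>\<bar> * M\<^sup>2 + (\<bar>t\<bar> + 1) * M\<^sup>2"
      by (metis M_def add.assoc distrib_right)
    moreover have "M \<le> M\<^sup>2" using M by (simp add: power2_eq_square)
    moreover have "0 \<le> u ^ 3" using u by simp
    moreover have "(\<bar>t\<bar> + 1) * M \<le> (\<bar>t\<bar> + 1) * M\<^sup>2"
      using \<open>M \<le> M\<^sup>2\<close> by (simp add: mult_left_mono)
    ultimately show ?thesis using tau_term by linarith
  next
    case False
    have "(t + 1 / 2) * u \<le> (\<bar>t\<bar> + 1) * u\<^sup>2"
      using False M by (intro mult_mono) (auto simp: power2_eq_square)
    moreover have "M * u\<^sup>2 \<le> u * u\<^sup>2"
      using False u by (intro mult_right_mono) auto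
    moreover have "u ^ 3 = u * u\<^sup>2" "M * u\<^sup>2 = \<bar>\<tau>\<bar> * u\<^sup>2 + (\<bar>t\<bar> + 1) * u\<^sup>2"
      by (simp_all add: M_def power2_eq_square power3_eq_cube distrib_right)
    moreover have "0 \<le> M ^ 3" using M by simp
    ultimately show ?thesis using tau_term by linarith
  qed
  moreover have "x ^ 6 = u ^ 3" "x ^ 4 = u\<^sup>2" "x\<^sup>2 = u"
    by (simp_all add: u_def flip: power_mult)
  ultimately show ?thesis unfolding M_def by (simp add: algebra_simps)
qed

lemma sextic_weight_le_gaussian:
  "sextic_weight \<tau> t x \<le> exp ((\<bar>\<tau>\<bar> + \<bar>t\<bar> + 1) ^ 3) * exp (- (x\<^sup>2) / 2)"
  unfolding sextic_weight_def using sextic_exponent_le[of x \<tau> t] by (simp flip: exp_add)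

lemma integrable_monomial_sextic_weight:
  "integrable lborel (\<lambda>x. x ^ k * sextic_weight \<tau> t x)"
proof (rule Bochner_Integration.integrable_bound)
  define C where "C = exp ((\<bar>\<tau>\<bar> + \<bar>t\<bar> + 1) ^ 3) * sqrt (2 * pi)"
  show "integrable lborel (\<lambda>x. C * (std_normal_density x * \<bar>x\<bar> ^ k))"
    by (intro Bochner_Integration.integrable_mult_right integrable_std_normal_moment_abs)
  show "AE x in lborel. norm (x ^ k * sextic_weight \<tau> t x) \<le> norm (C * (std_normal_density x * \<bar>x\<bar> ^ k))"
  proof (rule AE_I2)
    fix x :: real
    have "norm (x ^ k * sextic_weight \<tau> t x) = \<bar>x\<bar> ^ k * sextic_weight \<tau> t x"
      by (simp add: abs_mult power_abs sextic_weight_def)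
    also have "\<dots> \<le> \<bar>x\<bar> ^ k * (exp ((\<bar>\<tau>\<bar> + \<bar>t\<bar> + 1) ^ 3) * exp (- (x\<^sup>2) / 2))"
      by (intro mult_left_mono sextic_weight_le_gaussian) auto
    also have "\<dots> = norm (C * (std_normal_density x * \<bar>x\<bar> ^ k))"
      by (simp add: C_def std_normal_density_def abs_mult)
    finally show "norm (x ^ k * sextic_weight \<tau> t x) \<le> norm (C * (std_normal_density x * \<bar>x\<bar> ^ k))" .
  qed
qed (simp add: sextic_weight_def)

definition sextic_potential :: "real \<Rightarrow> real \<Rightarrow> real poly" where
  "sextic_potential \<tau> t = [:0, 0, -t, 0, -\<tau>, 0, 1:]"

lemma sextic_weight_eq_exp_potential:
  "sextic_weight \<tau> t x = exp (- poly (sextic_potential \<tau> t) x)"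
  unfolding sextic_weight_def sextic_potential_def by (simp add: algebra_simps power_numeral_reduce)

lemma moment_functional_sextic_pderiv:
  "moment_functional (sextic_weight \<tau> t) (pderiv p)
     = moment_functional (sextic_weight \<tau> t) (p * pderiv (sextic_potential \<tau> t))"
proof (rule moment_functional_pderiv)
  show "((\<lambda>x. x ^ k * sextic_weight \<tau> t x) \<longlongrightarrow> 0) at_bot"
    and "((\<lambda>x. x ^ k * sextic_weight \<tau> t x) \<longlongrightarrow> 0) at_top" for k
    unfolding sextic_weight_def by real_asymp+
qed (fact sextic_weight_eq_exp_potential integrable_monomial_sextic_weight)+

lemma symmetric_OPS_moment_functional:
  assumes ops: "monic_OPS_rec w P \<beta>"
    and integrable: "\<And>k. integrable lborel (\<lambda>x. x ^ k * w x)"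
    and pos: "\<And>x. w x > 0"
  shows "symmetric_OPS (moment_functional w) P \<beta>"
proof
  show "moment_functional w (p + q) = moment_functional w p + moment_functional w q" for p q
    using integrable by (rule moment_functional_add)
  show "moment_functional w (smult c p) = c * moment_functional w p" for c p
    by (rule moment_functional_smult)
  show "moment_functional w 1 \<noteq> 0"
  proof
    assume "moment_functional w 1 = 0"
    then have "AE x in lborel. w x = 0"
      using integrable[of 0] pos by (simp add: moment_functional_def integral_nonneg_eq_0_iff_AE less_imp_le)
    then have "AE x in (lborel :: real measure). False"
      using pos by (auto elim: eventually_mono simp: less_le)
    then show False
      using ae_filter_eq_bot_iff[of "lborel :: real measure"] trivial_limit_def by auto
  qed
  show "moment_functional w (P m * P n) = 0" if "m \<noteq> n" for m n
  proof -
    have "((\<lambda>x. poly (P m * P n) x * w x) has_integral 0) UNIV"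
      using ops that by (simp add: monic_OPS_rec_def)
    moreover have "((\<lambda>x. poly (P m * P n) x * w x) has_integral moment_functional w (P m * P n)) UNIV"
      unfolding moment_functional_def using integrable by (intro has_integral_integral_lborel integrable_poly_mult)
    ultimately show ?thesis
      by (rule has_integral_unique[symmetric])
  qed
  show "P (Suc n) = x_poly * P n - smult (\<beta> n) (P (n - 1))" for n
    using ops by (cases n) (simp_all add: monic_OPS_rec_def x_poly_def)
  show "degree (P n) = n" "lead_coeff (P n) = 1" for n
    using ops unfolding monic_OPS_rec_def by blast+
  show "\<beta> 0 = 0" "n \<ge> 1 \<Longrightarrow> \<beta> n \<noteq> 0" for n
    using ops by (auto simp: monic_OPS_rec_def less_imp_neq[symmetric])
qed

lemma pderiv_sextic_potential_split:
  "pderiv (sextic_potential \<tau> t)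
     = [:poly (pderiv (sextic_potential \<tau> t)) x:] + [:-x, 1:] * sextic_difference_quotient \<tau> t x"
  by (rule poly_ext)
    (simp add: sextic_potential_def sextic_difference_quotient_def pderiv_pCons algebra_simps
      power_numeral_reduce)

lemma symmetric_OPS_sextic_weight:
  assumes "monic_OPS_rec (sextic_weight \<tau> t) P \<beta>"
  shows "symmetric_OPS (moment_functional (sextic_weight \<tau> t)) P \<beta>"
  using assms integrable_monomial_sextic_weight by (rule symmetric_OPS_moment_functional) (simp add: sextic_weight_def)

theorem theorem4p2:
  fixes \<tau> t :: real and P :: "nat \<Rightarrow> real poly" and \<beta> :: "nat \<Rightarrow> real"
  assumes "monic_OPS_rec (sextic_weight \<tau> t) P \<beta>"
    and "n \<ge> 1"
  shows "poly (pderiv (P n)) x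
           = - coeffB \<tau> t \<beta> n x * poly (P n) x + coeffA \<tau> t \<beta> n x * poly (P (n - 1)) x"
proof -
  interpret symmetric_OPS "moment_functional (sextic_weight \<tau> t)" P \<beta>
    using assms(1) by (rule symmetric_OPS_sextic_weight)
  obtain m where n: "n = Suc m"
    using assms(2) by (cases n) auto
  have "h m * poly (pderiv (P (Suc m))) x
      = poly (P m) x * (h m * coeffA \<tau> t \<beta> (Suc m) x)
        - poly (P (Suc m)) x * (h m * coeffB \<tau> t \<beta> (Suc m) x)"
    using ladder_relation[OF moment_functional_sextic_pderiv pderiv_sextic_potential_split, of m]
    unfolding L_sextic_difference_quotient_P_P L_sextic_difference_quotient_P_Suc_P .
  then have "h m * poly (pderiv (P n)) x
      = h m * (- coeffB \<tau> t \<beta> n x * poly (P n) x + coeffA \<tau> t \<beta> n x * poly (P (n - 1)) x)"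
    unfolding n by (simp add: algebra_simps)
  then show ?thesis
    using h_nonzero[of m] by simp
qed

end
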